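(* Let $s_1,\dots,s_n\in\{0,1\}^{<\mathbb N}$ with $s_i\notin\{1^m:m\ge0\}$ for each $i$, and let $t_1,\dots,t_n\in\mathbb Z$ with $\sum_{i=1}^n t_i=0$. Then $y_{s_1}^{t_1}\cdots y_{s_n}^{t_n}\in S$.
   Context: Let $\{0,1\}^{\mathbb N}$ be the Cantor set of infinite binary sequences and $\{0,1\}^{<\mathbb N}$ the set of finite binary words, including the empty word (note $1^0$ is the empty word); juxtaposition denotes concatenation, $0^n,1^n$ denote constant words. Homeomorphisms act on the right. Define $x,y$ by $00\eta\cdot x=0\eta$, $01\eta\cdot x=10\eta$, $1\eta\cdot x=11\eta$, and recursively $00\eta\cdot y=0(\eta\cdot y)$, $01\eta\cdot y=10(\eta\cdot y^{-1})$, $1\eta\cdot y=11(\eta\cdot y)$; $x_s$ (resp. $y_s$) sends $s\eta\mapsto s(\eta\cdot x)$ (resp. $s(\eta\cdot y)$) and fixes sequences not beginning with $s$. For $n\ge0$, $p_n$ is the homeomorphism with $1^k0\eta\cdot p_n=1^{k+1}0\eta$ for $0\le k\le n-1$, $1^n0\eta\cdot p_n=1^{n+1}\eta$, and $1^{n+1}\eta\cdot p_n=0\eta$. $T$ is the group generated by all $x_s$ and all $p_n$, and $S=\langle T,\ y_{10}y_{110}^{-1}\rangle$. *)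

theory Defs
  imports Main
begin

text \<open>Cantor space: infinite binary sequences, with False = 0 and True = 1.
  Finite words are bool lists.  Homeomorphisms act on the right, so the group
  product g h (first g, then h) is the function composition h \<circ> g.\<close>

type_synonym seq = "nat \<Rightarrow> bool"
type_synonym homeo = "seq \<Rightarrow> seq"

definition conc :: "bool list \<Rightarrow> seq \<Rightarrow> seq" where
  "conc w \<eta> = (\<lambda>k. if k < length w then w ! k else \<eta> (k - length w))"

definition shift :: "nat \<Rightarrow> seq \<Rightarrow> seq" where
  "shift n \<eta> = (\<lambda>k. \<eta> (k + n))"

definition has_prefix :: "bool list \<Rightarrow> seq \<Rightarrow> bool" where
  "has_prefix w \<eta> \<longleftrightarrow> (\<forall>k<length w. \<eta> k = w ! k)"

definition at_word :: "bool list \<Rightarrow> homeo \<Rightarrow> homeo" where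
  "at_word s h \<eta> = (if has_prefix s \<eta> then conc s (h (shift (length s) \<eta>)) else \<eta>)"

definition xmap :: homeo where
  "xmap \<eta> =
     (if \<not> \<eta> 0 \<and> \<not> \<eta> 1 then conc [False] (shift 2 \<eta>)
      else if \<not> \<eta> 0 \<and> \<eta> 1 then conc [True, False] (shift 2 \<eta>)
      else conc [True, True] (shift 1 \<eta>))"

definition ymap :: homeo where
  "ymap = (THE f. bij f \<and>
     (\<forall>\<eta>. f (conc [False, False] \<eta>) = conc [False] (f \<eta>)
        \<and> f (conc [False, True] \<eta>) = conc [True, False] (inv f \<eta>)
        \<and> f (conc [True] \<eta>) = conc [True, True] (f \<eta>)))"

definition xs :: "bool list \<Rightarrow> homeo" where
  "xs s = at_word s xmap"

definition ys :: "bool list \<Rightarrow> homeo" where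
  "ys s = at_word s ymap"

definition pmap :: "nat \<Rightarrow> homeo" where
  "pmap n \<eta> =
     (if has_prefix (replicate (n+1) True) \<eta> then conc [False] (shift (n+1) \<eta>)
      else if has_prefix (replicate n True @ [False]) \<eta>
        then conc (replicate (n+1) True) (shift (n+1) \<eta>)
      else conc [True] \<eta>)"

inductive_set gen_group :: "homeo set \<Rightarrow> homeo set" for A where
  gen_base: "a \<in> A \<Longrightarrow> a \<in> gen_group A"
| gen_id: "id \<in> gen_group A"
| gen_mult: "g \<in> gen_group A \<Longrightarrow> h \<in> gen_group A \<Longrightarrow> h \<circ> g \<in> gen_group A"
| gen_inv: "g \<in> gen_group A \<Longrightarrow> inv g \<in> gen_group A"

definition T_gens :: "homeo set" where
  "T_gens = range xs \<union> range pmap"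

definition T_grp :: "homeo set" where
  "T_grp = gen_group T_gens"

text \<open>S = < T, y_10 y_110^{-1} >; the product y_10 y_110^{-1} (right action) is
  inv (ys [1,1,0]) \<circ> ys [1,0].\<close>
definition S_grp :: "homeo set" where
  "S_grp = gen_group (T_gens \<union> {inv (ys [True, True, False]) \<circ> ys [True, False]})"

definition zpow :: "homeo \<Rightarrow> int \<Rightarrow> homeo" where
  "zpow f t = (if 0 \<le> t then f ^^ nat t else (inv f) ^^ nat (- t))"

definition rprod :: "homeo list \<Rightarrow> homeo" where
  "rprod gs = foldl (\<lambda>acc g. g \<circ> acc) id gs"

end

theory Submission
  imports Defs
begin

text \<open>Conjugating by an element g of T that maps the cylinder s\<eta> onto s'\<eta> turns y_s into
  y_s'.  The elements x, x_1 and p_2 of T, together with the extra generator identifying y_10 with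
  y_110 modulo S, therefore show that y_s \<equiv> y_10 modulo S for every word s containing a 0,
  i.e. y_s y_10^-1 \<in> S.  Now choose r = 1^N 0 with N so large that r is incomparable with
  every s_i.  Then y_r commutes with each y_s_i, so the product of the y_s_i^t_i equals
  y_r^(\<Sum>t_i) times an element of S, and \<Sum>t_i = 0.\<close>

section \<open>Sequences and cylinders\<close>

definition scons :: "bool \<Rightarrow> seq \<Rightarrow> seq" where
  "scons b z = (\<lambda>k. if k = 0 then b else z (k - 1))"

lemma scons_0 [simp]: "scons b z 0 = b"
  by (simp add: scons_def)

lemma scons_Suc [simp]: "scons b z (Suc k) = z k"
  by (simp add: scons_def)

lemma scons_numeral [simp]: "scons b z (numeral n) = z (pred_numeral n)"
  by (simp add: numeral_eq_Suc)

lemma conc_Nil [simp]: "conc [] \<eta> = \<eta>"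
  by (simp add: conc_def)

lemma conc_Cons [simp]: "conc (b # w) \<eta> = scons b (conc w \<eta>)"
  by (rule ext, rename_tac k, case_tac k) (auto simp: conc_def scons_def)

lemma shift_0 [simp]: "shift 0 \<eta> = \<eta>"
  by (simp add: shift_def)

lemma shift_Suc_scons [simp]: "shift (Suc n) (scons b z) = shift n z"
  by (simp add: shift_def scons_def)

lemma shift_1_scons [simp]: "shift 1 (scons b z) = z"
  by (simp add: shift_def scons_def)

lemma shift_numeral_scons [simp]: "shift (numeral n) (scons b z) = shift (pred_numeral n) z"
  by (simp add: numeral_eq_Suc)

lemma scons_shift: "scons (\<eta> 0) (shift 1 \<eta>) = \<eta>"
  by (rule ext, rename_tac k, case_tac k) (auto simp: scons_def shift_def)

lemma seq_scons2: "\<exists>a b z. \<eta> = scons a (scons b z)"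
  by (metis scons_shift)

lemma seq_scons5: "\<exists>a b c d e z. \<eta> = scons a (scons b (scons c (scons d (scons e z))))"
  by (metis scons_shift)

lemma has_prefix_Nil [simp]: "has_prefix [] \<eta>"
  by (simp add: has_prefix_def)

lemma has_prefix_Cons [simp]: "has_prefix (a # w) \<eta> \<longleftrightarrow> \<eta> 0 = a \<and> has_prefix w (shift 1 \<eta>)"
  unfolding has_prefix_def by (auto simp: shift_def less_Suc_eq_0_disj)

lemma has_prefix_conc [simp]: "has_prefix w (conc w \<eta>)"
  by (induct w) auto

lemma shift_conc [simp]: "shift (length w) (conc w \<eta>) = \<eta>"
  by (induct w) auto

lemma conc_shift: "has_prefix w \<eta> \<Longrightarrow> conc w (shift (length w) \<eta>) = \<eta>"
proof (induct w arbitrary: \<eta>)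
  case Nil
  then show ?case by simp
next
  case (Cons a w)
  have "shift (length (a # w)) \<eta> = shift (length w) (shift 1 \<eta>)"
    by (rule ext) (simp add: shift_def)
  then have "conc (a # w) (shift (length (a # w)) \<eta>) = scons a (shift 1 \<eta>)"
    using Cons by simp
  also have "\<dots> = \<eta>"
    using Cons.prems scons_shift[of \<eta>] by simp
  finally show ?case .
qed

lemma has_prefix_iff_conc: "has_prefix w \<eta> \<longleftrightarrow> (\<exists>\<zeta>. \<eta> = conc w \<zeta>)"
  by (metis conc_shift has_prefix_conc)

definition incomparable :: "bool list \<Rightarrow> bool list \<Rightarrow> bool" where
  "incomparable a b \<longleftrightarrow> (\<exists>i. i < length a \<and> i < length b \<and> a ! i \<noteq> b ! i)"

lemma incomparable_sym: "incomparable a b \<Longrightarrow> incomparable b a"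
  unfolding incomparable_def by metis

lemma incomparable_has_prefix: "incomparable a b \<Longrightarrow> has_prefix a \<eta> \<Longrightarrow> \<not> has_prefix b \<eta>"
  unfolding incomparable_def has_prefix_def by metis

section \<open>Homeomorphisms acting on a cylinder\<close>

lemma at_word_conc [simp]: "at_word w h (conc w \<eta>) = conc w (h \<eta>)"
  by (simp add: at_word_def)

lemma at_word_outside: "\<not> has_prefix w \<zeta> \<Longrightarrow> at_word w h \<zeta> = \<zeta>"
  by (simp add: at_word_def)

lemma at_word_Nil [simp]: "at_word [] h = h"
  by (rule ext) (simp add: at_word_def)

lemma at_word_comp: "at_word w h \<circ> at_word w k = at_word w (h \<circ> k)"
proof (rule ext)
  fix \<zeta>
  show "(at_word w h \<circ> at_word w k) \<zeta> = at_word w (h \<circ> k) \<zeta>"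
    by (cases "has_prefix w \<zeta>") (auto simp: has_prefix_iff_conc at_word_outside)
qed

lemma at_word_id: "at_word w id = id"
proof (rule ext)
  fix \<zeta>
  show "at_word w id \<zeta> = id \<zeta>"
    by (cases "has_prefix w \<zeta>") (auto simp: has_prefix_iff_conc at_word_outside)
qed

lemma
  assumes "bij h"
  shows bij_at_word: "bij (at_word w h)"
    and inv_at_word: "inv (at_word w h) = at_word w (inv h)"
proof -
  have "inv h \<circ> h = id" "h \<circ> inv h = id"
    using assms by (simp_all add: bij_is_inj bij_is_surj flip: surj_iff)
  then have 1: "at_word w (inv h) \<circ> at_word w h = id"
    and 2: "at_word w h \<circ> at_word w (inv h) = id"
    by (simp_all add: at_word_comp at_word_id)
  show "bij (at_word w h)" by (rule o_bij[OF 1 2])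
  show "inv (at_word w h) = at_word w (inv h)" by (rule inv_unique_comp[OF 2 1])
qed

lemma at_word_commute:
  assumes "incomparable a b"
  shows "at_word a h \<circ> at_word b k = at_word b k \<circ> at_word a h"
proof (rule ext)
  fix \<zeta>
  consider (a) \<eta> where "\<zeta> = conc a \<eta>" | (b) \<eta> where "\<zeta> = conc b \<eta>"
    | (neither) "\<not> has_prefix a \<zeta>" "\<not> has_prefix b \<zeta>"
    using has_prefix_iff_conc by blast
  then show "(at_word a h \<circ> at_word b k) \<zeta> = (at_word b k \<circ> at_word a h) \<zeta>"
  proof cases
    case a
    then show ?thesis
      using assms incomparable_has_prefix by (simp add: at_word_outside)
  next
    case b
    then show ?thesis
      using incomparable_sym[OF assms] incomparable_has_prefix by (simp add: at_word_outside)
  qed (simp add: at_word_outside)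
qed

lemma at_word_conj:
  assumes "bij g" and g: "\<And>\<eta>. g (conc a \<eta>) = conc a' \<eta>"
  shows "at_word a' h = g \<circ> at_word a h \<circ> inv g"
proof (rule ext)
  fix \<zeta>
  have inv_g: "inv g (conc a' \<eta>) = conc a \<eta>" for \<eta>
    using g assms(1) by (metis bij_inv_eq_iff)
  show "at_word a' h \<zeta> = (g \<circ> at_word a h \<circ> inv g) \<zeta>"
  proof (cases "has_prefix a' \<zeta>")
    case True
    then show ?thesis by (auto simp: has_prefix_iff_conc inv_g g)
  next
    case False
    have "\<not> has_prefix a (inv g \<zeta>)"
      using False g assms(1) by (metis bij_inv_eq_iff has_prefix_iff_conc)
    then show ?thesis
      using False assms(1) by (simp add: at_word_outside bij_is_surj surj_f_inv_f)
  qed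
qed

definition xinv :: homeo where
  "xinv \<eta> =
     (if \<not> \<eta> 0 then scons False (scons False (shift 1 \<eta>))
      else if \<not> \<eta> 1 then scons False (scons True (shift 1 (shift 1 \<eta>)))
      else scons True (shift 1 (shift 1 \<eta>)))"

lemma xmap_scons2:
  "xmap (scons a (scons b z)) =
     (if \<not> a \<and> \<not> b then scons False z
      else if \<not> a then scons True (scons False z)
      else scons True (scons True (scons b z)))"
  by (simp add: xmap_def)

lemma xinv_scons2:
  "xinv (scons a (scons b z)) =
     (if \<not> a then scons False (scons False (scons b z))
      else if \<not> b then scons False (scons True z)
      else scons True z)"
  by (simp add: xinv_def)

lemma bij_xmap: "bij xmap"
proof -
  have "(xinv \<circ> xmap) \<eta> = id \<eta> \<and> (xmap \<circ> xinv) \<eta> = id \<eta>" for \<eta>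
  proof -
    obtain a b c d e z where "\<eta> = scons a (scons b (scons c (scons d (scons e z))))"
      using seq_scons5 by blast
    then show ?thesis
      by (cases a; cases b; cases c; simp add: xmap_scons2 xinv_scons2)
  qed
  then show ?thesis
    by (intro o_bij[of xinv]) auto
qed

definition p2inv :: homeo where
  "p2inv \<eta> =
     (if \<not> \<eta> 0 then scons True (scons True (scons True (shift 1 \<eta>)))
      else if \<not> \<eta> 1 then scons False (shift 1 (shift 1 \<eta>))
      else if \<not> \<eta> 2 then scons True (scons False (shift 1 (shift 1 (shift 1 \<eta>))))
      else scons True (scons True (scons False (shift 1 (shift 1 (shift 1 \<eta>))))))"

lemma pmap2_scons3:
  "pmap 2 (scons a (scons b (scons c z))) =
     (if a \<and> b \<and> c then scons False z
      else if a \<and> b then scons True (scons True (scons True z))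
      else scons True (scons a (scons b (scons c z))))"
  by (simp add: pmap_def numeral_eq_Suc)

lemma p2inv_scons3:
  "p2inv (scons a (scons b (scons c z))) =
     (if \<not> a then scons True (scons True (scons True (scons b (scons c z))))
      else if \<not> b then scons False (scons c z)
      else if \<not> c then scons True (scons False z)
      else scons True (scons True (scons False z)))"
  by (simp add: p2inv_def)

lemma bij_pmap2: "bij (pmap 2)"
proof -
  have "(p2inv \<circ> pmap 2) \<eta> = id \<eta> \<and> (pmap 2 \<circ> p2inv) \<eta> = id \<eta>" for \<eta>
  proof -
    obtain a b c d e z where "\<eta> = scons a (scons b (scons c (scons d (scons e z))))"
      using seq_scons5 by blast
    then show ?thesis
      by (cases a; cases b; cases c; cases d; simp add: pmap2_scons3 p2inv_scons3)
  qed
  then show ?thesis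
    by (intro o_bij[of p2inv]) auto
qed

section \<open>The homeomorphism y\<close>

text \<open>The recursive equations for y are read as a transducer with two states, True computing y
  and False computing y^-1; a step returns the output word, the next state and the number of
  letters read.  Every step outputs at least one letter, so the first k + 1 steps determine the
  k-th letter of the image.\<close>

definition ystep :: "bool \<Rightarrow> seq \<Rightarrow> bool list \<times> bool \<times> nat" where
  "ystep m \<eta> =
     (if m then
        (if \<not> \<eta> 0 \<and> \<not> \<eta> 1 then ([False], True, 2)
         else if \<not> \<eta> 0 then ([True, False], False, 2)
         else ([True, True], True, 1))
      else
        (if \<not> \<eta> 0 then ([False, False], False, 1)
         else if \<not> \<eta> 1 then ([False, True], True, 2)
         else ([True], False, 2)))"

fun yout :: "nat \<Rightarrow> bool \<Rightarrow> seq \<Rightarrow> bool list" where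
  "yout 0 m \<eta> = []"
| "yout (Suc n) m \<eta> = (case ystep m \<eta> of (w, m', c) \<Rightarrow> w @ yout n m' (shift c \<eta>))"

definition ytrans :: "bool \<Rightarrow> homeo" where
  "ytrans m \<eta> k = yout (Suc k) m \<eta> ! k"

lemma ystep_output_nonempty: "ystep m \<eta> = (w, m', c) \<Longrightarrow> w \<noteq> []"
  by (auto simp: ystep_def split: if_splits)

lemma length_yout: "n \<le> length (yout n m \<eta>)"
proof (induct n arbitrary: m \<eta>)
  case (Suc n)
  obtain w m' c where s: "ystep m \<eta> = (w, m', c)"
    by (cases "ystep m \<eta>") auto
  then have "w \<noteq> []" by (rule ystep_output_nonempty)
  with Suc[of m' "shift c \<eta>"] s show ?case
    by (cases w) auto
qed simp

lemma yout_Suc_extends: "\<exists>v. yout (Suc n) m \<eta> = yout n m \<eta> @ v"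
proof (induct n arbitrary: m \<eta>)
  case (Suc n)
  obtain w m' c where "ystep m \<eta> = (w, m', c)"
    by (cases "ystep m \<eta>") auto
  with Suc[of m' "shift c \<eta>"] show ?case by auto
qed simp

lemma yout_extends: "n \<le> n' \<Longrightarrow> \<exists>v. yout n' m \<eta> = yout n m \<eta> @ v"
proof (induct n' rule: dec_induct)
  case (step n')
  then show ?case
    using yout_Suc_extends[of n' m \<eta>] by (metis append.assoc)
qed simp

lemma yout_nth: "k < length (yout n m \<eta>) \<Longrightarrow> yout n m \<eta> ! k = ytrans m \<eta> k"
proof -
  assume k: "k < length (yout n m \<eta>)"
  obtain v where v: "yout (max n (Suc k)) m \<eta> = yout n m \<eta> @ v"
    using yout_extends[of n "max n (Suc k)"] by auto
  obtain u where u: "yout (max n (Suc k)) m \<eta> = yout (Suc k) m \<eta> @ u"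
    using yout_extends[of "Suc k" "max n (Suc k)"] by auto
  have "k < length (yout (Suc k) m \<eta>)"
    using length_yout[of "Suc k" m \<eta>] by simp
  then show ?thesis
    using k u v by (metis nth_append_left ytrans_def)
qed

lemma ytrans_step: "ystep m \<eta> = (w, m', c) \<Longrightarrow> ytrans m \<eta> = conc w (ytrans m' (shift c \<eta>))"
proof (rule ext)
  fix k
  assume s: "ystep m \<eta> = (w, m', c)"
  show "ytrans m \<eta> k = conc w (ytrans m' (shift c \<eta>)) k"
  proof (cases "k < length w")
    case True
    then show ?thesis
      using s by (simp add: ytrans_def conc_def nth_append)
  next
    case False
    define n where "n = Suc (k - length w)"
    have n: "k - length w < length (yout n m' (shift c \<eta>))"
      using length_yout[of n m' "shift c \<eta>"] n_def by simp
    have eq: "yout (Suc n) m \<eta> = w @ yout n m' (shift c \<eta>)"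
      using s by simp
    have "k < length (yout (Suc n) m \<eta>)"
      unfolding eq using n False by simp
    then have "ytrans m \<eta> k = yout (Suc n) m \<eta> ! k"
      by (rule yout_nth[symmetric])
    also have "\<dots> = yout n m' (shift c \<eta>) ! (k - length w)"
      unfolding eq using False by (simp add: nth_append)
    also have "\<dots> = ytrans m' (shift c \<eta>) (k - length w)"
      using n by (rule yout_nth)
    finally show ?thesis
      using False by (simp add: conc_def)
  qed
qed

lemma ytrans_unfold:
  "ytrans m \<eta> = (case ystep m \<eta> of (w, m', c) \<Rightarrow> conc w (ytrans m' (shift c \<eta>)))"
  by (cases "ystep m \<eta>") (simp add: ytrans_step)

lemma ytrans_simps [simp]:
  "ytrans True (scons False (scons False z)) = scons False (ytrans True z)"
  "ytrans True (scons False (scons True z)) = scons True (scons False (ytrans False z))"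
  "ytrans True (scons True z) = scons True (scons True (ytrans True z))"
  "ytrans False (scons False z) = scons False (scons False (ytrans False z))"
  "ytrans False (scons True (scons False z)) = scons False (scons True (ytrans True z))"
  "ytrans False (scons True (scons True z)) = scons True (ytrans False z)"
  by (subst ytrans_unfold, simp add: ystep_def)+

definition agree_upto :: "nat \<Rightarrow> seq \<Rightarrow> seq \<Rightarrow> bool" where
  "agree_upto k X Z \<longleftrightarrow> (\<forall>i<k. X i = Z i)"

lemma agree_upto_0 [simp]: "agree_upto 0 X Z"
  by (simp add: agree_upto_def)

lemma agree_upto_scons: "agree_upto k X Z \<Longrightarrow> agree_upto (Suc k) (scons b X) (scons b Z)"
  unfolding agree_upto_def by (auto simp: less_Suc_eq_0_disj)

lemma agree_upto_scons2:
  "agree_upto k X Z \<Longrightarrow> agree_upto (Suc k) (scons b (scons c X)) (scons b (scons c Z))"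
  using agree_upto_scons[OF agree_upto_scons] unfolding agree_upto_def by simp

lemma agree_upto_all: "(\<And>k. agree_upto k X Z) \<Longrightarrow> X = Z"
  unfolding agree_upto_def by (rule ext) blast

lemma ytrans_False_True: "ytrans False \<circ> ytrans True = id"
  and ytrans_True_False: "ytrans True \<circ> ytrans False = id"
proof -
  have "agree_upto k (ytrans False (ytrans True \<eta>)) \<eta>
      \<and> agree_upto k (ytrans True (ytrans False \<eta>)) \<eta>" for k \<eta>
  proof (induct k arbitrary: \<eta>)
    case (Suc k)
    obtain a b z where "\<eta> = scons a (scons b z)"
      using seq_scons2 by metis
    then show ?case
      using Suc[of z] Suc[of "scons b z"]
      by (cases a; cases b; simp add: agree_upto_scons agree_upto_scons2)
  qed simp
  then show "ytrans False \<circ> ytrans True = id" "ytrans True \<circ> ytrans False = id"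
    by (auto intro!: ext agree_upto_all)
qed

definition y_equations :: "homeo \<Rightarrow> bool" where
  "y_equations f \<longleftrightarrow> bij f \<and>
     (\<forall>\<eta>. f (conc [False, False] \<eta>) = conc [False] (f \<eta>)
        \<and> f (conc [False, True] \<eta>) = conc [True, False] (inv f \<eta>)
        \<and> f (conc [True] \<eta>) = conc [True, True] (f \<eta>))"

lemma bij_ytrans_True: "bij (ytrans True)"
  by (rule o_bij[OF ytrans_False_True ytrans_True_False])

lemma inv_ytrans_True: "inv (ytrans True) = ytrans False"
  by (rule inv_unique_comp[OF ytrans_True_False ytrans_False_True])

lemma y_equations_ytrans: "y_equations (ytrans True)"
  unfolding y_equations_def using bij_ytrans_True inv_ytrans_True by simp

lemma y_equations_unique:
  assumes "y_equations f"
  shows "f = ytrans True"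
proof -
  have b: "bij f"
    using assms y_equations_def by simp
  have f1: "f (scons False (scons False z)) = scons False (f z)"
    and f2: "f (scons False (scons True z)) = scons True (scons False (inv f z))"
    and f3: "f (scons True z) = scons True (scons True (f z))" for z
    using assms unfolding y_equations_def by simp_all
  have g1: "inv f (scons False z) = scons False (scons False (inv f z))"
    and g2: "inv f (scons True (scons False z)) = scons False (scons True (f z))"
    and g3: "inv f (scons True (scons True z)) = scons True (inv f z)" for z
    using f1[of "inv f z"] f2[of "f z"] f3[of "inv f z"] b by (metis bij_inv_eq_iff)+
  have "agree_upto k (f \<eta>) (ytrans True \<eta>) \<and> agree_upto k (inv f \<eta>) (ytrans False \<eta>)" for k \<eta>
  proof (induct k arbitrary: \<eta>)
    case (Suc k)
    obtain a b z where "\<eta> = scons a (scons b z)"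
      using seq_scons2 by metis
    then show ?case
      using Suc[of z] Suc[of "scons b z"]
      by (cases a; cases b; simp add: f1 f2 f3 g1 g2 g3 agree_upto_scons agree_upto_scons2)
  qed simp
  then show ?thesis
    by (auto intro!: ext agree_upto_all)
qed

lemma ymap_eq_ytrans: "ymap = ytrans True"
  unfolding ymap_def
  using y_equations_ytrans y_equations_unique
  by (intro the_equality) (auto simp: y_equations_def)

lemma bij_ys: "bij (ys w)"
  unfolding ys_def ymap_eq_ytrans by (rule bij_at_word[OF bij_ytrans_True])

lemma inv_ys: "inv (ys w) = at_word w (inv ymap)"
  unfolding ys_def ymap_eq_ytrans by (rule inv_at_word[OF bij_ytrans_True])

section \<open>Integer powers in generated groups\<close>

lemma gen_group_conj_iff:
  assumes "g \<in> gen_group A" "bij g"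
  shows "g \<circ> f \<circ> inv g \<in> gen_group A \<longleftrightarrow> f \<in> gen_group A"
proof
  have ig: "inv g \<in> gen_group A"
    using assms(1) by (rule gen_inv)
  have cancel: "inv g \<circ> ((g \<circ> f \<circ> inv g) \<circ> g) = f"
    using assms(2) by (simp add: fun_eq_iff bij_is_inj)
  show "f \<in> gen_group A" if "g \<circ> f \<circ> inv g \<in> gen_group A"
    using gen_mult[OF gen_mult[OF assms(1) that] ig] by (simp only: cancel)
  show "g \<circ> f \<circ> inv g \<in> gen_group A" if "f \<in> gen_group A"
    using gen_mult[OF gen_mult[OF ig that] assms(1)] by (simp only: comp_assoc)
qed

lemma zpow_0 [simp]: "zpow f 0 = id"
  by (simp add: zpow_def)

lemma zpow_add1:
  assumes "bij f"
  shows "zpow f (t + 1) = f \<circ> zpow f t"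
proof (cases "0 \<le> t")
  case True
  then have "nat (t + 1) = Suc (nat t)" by simp
  then show ?thesis
    using True by (simp add: zpow_def)
next
  case False
  then have "nat (- t) = Suc (nat (- (t + 1)))" by simp
  moreover have "f \<circ> inv f = id"
    using assms by (simp add: bij_is_surj flip: surj_iff)
  ultimately show ?thesis
    using False by (simp add: zpow_def funpow_Suc_right flip: comp_assoc)
qed

lemma zpow_diff1:
  assumes "bij f"
  shows "zpow f (t - 1) = inv f \<circ> zpow f t"
  using zpow_add1[OF assms, of "t - 1"] assms
  by (simp add: bij_is_inj flip: comp_assoc)

lemma zpow_add:
  assumes "bij f"
  shows "zpow f (a + b) = zpow f a \<circ> zpow f b"
proof (induct a rule: int_induct[where k = 0])
  case (step1 i)
  have "i + 1 + b = (i + b) + 1" by simp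
  then show ?case
    using step1 by (simp only: zpow_add1[OF assms] comp_assoc)
next
  case (step2 i)
  have "i - 1 + b = (i + b) - 1" by simp
  then show ?case
    using step2 by (simp only: zpow_diff1[OF assms] comp_assoc)
qed simp

lemma zpow_inv:
  assumes "bij f"
  shows "zpow (inv f) t = zpow f (- t)"
  using assms by (simp add: zpow_def inv_inv_eq)

lemma inv_commute:
  assumes "f \<circ> g = g \<circ> f" "bij g"
  shows "inv g \<circ> f = f \<circ> inv g"
proof (rule ext)
  fix x
  have "g (f (inv g x)) = f x"
    using fun_cong[OF assms(1), of "inv g x"] assms(2) by (simp add: bij_is_surj surj_f_inv_f)
  then show "(inv g \<circ> f) x = (f \<circ> inv g) x"
    using assms(2) by (metis bij_inv_eq_iff comp_apply)
qed

lemma zpow_commute: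
  assumes "f \<circ> g = g \<circ> f" "bij g"
  shows "zpow g t \<circ> f = f \<circ> zpow g t"
proof (induct t rule: int_induct[where k = 0])
  case (step1 i)
  have "zpow g (i + 1) \<circ> f = g \<circ> (zpow g i \<circ> f)"
    by (simp only: zpow_add1[OF assms(2)] comp_assoc)
  also have "\<dots> = (f \<circ> g) \<circ> zpow g i"
    by (simp only: step1(2) assms(1) comp_assoc)
  finally show ?case
    by (simp only: zpow_add1[OF assms(2)] comp_assoc)
next
  case (step2 i)
  have "zpow g (i - 1) \<circ> f = inv g \<circ> (zpow g i \<circ> f)"
    by (simp only: zpow_diff1[OF assms(2)] comp_assoc)
  also have "\<dots> = f \<circ> (inv g \<circ> zpow g i)"
    by (simp only: step2(2) inv_commute[OF assms] flip: comp_assoc)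
  finally show ?case
    by (simp only: zpow_diff1[OF assms(2)])
qed simp

lemma zpow_comp_commute:
  assumes "f \<circ> g = g \<circ> f" "bij f" "bij g"
  shows "zpow (f \<circ> g) t = zpow f t \<circ> zpow g t"
proof (induct t rule: int_induct[where k = 0])
  case (step1 i)
  have "zpow (f \<circ> g) (i + 1) = f \<circ> (g \<circ> zpow f i) \<circ> zpow g i"
    by (simp only: zpow_add1[OF bij_comp[OF assms(3,2)]] step1(2) comp_assoc)
  also have "\<dots> = (f \<circ> zpow f i) \<circ> (g \<circ> zpow g i)"
    by (simp only: zpow_commute[OF assms(1)[symmetric] assms(2), symmetric] comp_assoc)
  finally show ?case
    by (simp only: zpow_add1[OF assms(2)] zpow_add1[OF assms(3)])
next
  case (step2 i)
  have "zpow (f \<circ> g) (i - 1) = inv g \<circ> zpow f (i - 1) \<circ> zpow g i"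
    by (simp only: zpow_diff1[OF bij_comp[OF assms(3,2)]] o_inv_distrib[OF assms(2,3)]
        zpow_diff1[OF assms(2)] step2(2) comp_assoc)
  also have "\<dots> = zpow f (i - 1) \<circ> (inv g \<circ> zpow g i)"
    by (simp only: zpow_commute[OF inv_commute[OF assms(1,3)] assms(2), symmetric] comp_assoc)
  finally show ?case
    by (simp only: zpow_diff1[OF assms(3)])
qed simp

lemma gen_group_zpow:
  assumes "f \<in> gen_group A" "bij f"
  shows "zpow f t \<in> gen_group A"
proof (induct t rule: int_induct[where k = 0])
  case base
  show ?case unfolding zpow_0 by (rule gen_id)
next
  case (step1 i)
  show ?case
    unfolding zpow_add1[OF assms(2)] by (rule gen_mult[OF step1(2) assms(1)])
next
  case (step2 i)
  show ?case
    unfolding zpow_diff1[OF assms(2)] by (rule gen_mult[OF step2(2) gen_inv[OF assms(1)]])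
qed

lemma rprod_snoc: "rprod (gs @ [g]) = g \<circ> rprod gs"
  by (simp add: rprod_def)

lemma zpow_swap_commuting:
  assumes "bij R" "bij X" "X \<circ> R = R \<circ> X"
  shows "zpow X t \<circ> zpow R n = zpow R (n + t) \<circ> zpow (inv R \<circ> X) t"
proof -
  have "zpow (inv R \<circ> X) t = zpow R (- t) \<circ> zpow X t"
    using zpow_comp_commute[OF inv_commute[OF assms(3,1)] bij_imp_bij_inv[OF assms(1)] assms(2)]
    by (simp only: zpow_inv[OF assms(1)])
  moreover have "zpow R (n + t) \<circ> zpow R (- t) = zpow R n"
    using zpow_add[OF assms(1), of "n + t" "- t"] by simp
  moreover have "zpow X t \<circ> zpow R n = zpow R n \<circ> zpow X t"
    by (rule zpow_commute[OF zpow_commute[OF assms(3,1)] assms(2)])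
  ultimately show ?thesis
    by (simp only: flip: comp_assoc)
qed

lemma rprod_zpow_in_coset:
  assumes "bij R"
    and "\<And>s. s \<in> fst ` set ps \<Longrightarrow> bij (F s)"
    and "\<And>s. s \<in> fst ` set ps \<Longrightarrow> F s \<circ> R = R \<circ> F s"
    and "\<And>s. s \<in> fst ` set ps \<Longrightarrow> inv R \<circ> F s \<in> gen_group A"
  shows "\<exists>B \<in> gen_group A.
           rprod (map (\<lambda>(s, t). zpow (F s) t) ps) = zpow R (sum_list (map snd ps)) \<circ> B"
  using assms(2-4)
proof (induct ps rule: rev_induct)
  case Nil
  show ?case by (rule bexI[of _ id]) (simp_all add: rprod_def gen_id)
next
  case (snoc p ps)
  obtain s t where p: "p = (s, t)"
    by (cases p)
  have X: "bij (F s)" "F s \<circ> R = R \<circ> F s" "inv R \<circ> F s \<in> gen_group A"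
    by (rule snoc.prems; simp add: p)+
  obtain B where B: "B \<in> gen_group A"
    and IH: "rprod (map (\<lambda>(s, t). zpow (F s) t) ps) = zpow R (sum_list (map snd ps)) \<circ> B"
    using snoc.hyps by (metis snoc.prems UnCI image_Un set_append)
  have "rprod (map (\<lambda>(s, t). zpow (F s) t) (ps @ [p]))
      = zpow R (sum_list (map snd (ps @ [p]))) \<circ> (zpow (inv R \<circ> F s) t \<circ> B)"
    by (simp add: rprod_snoc p IH zpow_swap_commuting[OF assms(1) X(1,2)] flip: comp_assoc)
  moreover have "zpow (inv R \<circ> F s) t \<circ> B \<in> gen_group A"
    by (rule gen_mult[OF B gen_group_zpow[OF X(3) bij_comp[OF X(1) bij_imp_bij_inv[OF assms(1)]]]])
  ultimately show ?case
    by blast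
qed

section \<open>The y_s modulo S\<close>

lemma S_grp_T_gens: "g \<in> T_gens \<Longrightarrow> g \<in> S_grp"
  unfolding S_grp_def by (intro gen_base UnI1)

lemma S_grp_xs: "xs w \<in> S_grp"
  by (rule S_grp_T_gens) (simp add: T_gens_def)

lemma S_grp_pmap: "pmap n \<in> S_grp"
  by (rule S_grp_T_gens) (simp add: T_gens_def)

lemma S_grp_xmap: "xmap \<in> S_grp"
  using S_grp_xs[of "[]"] by (simp add: xs_def)

text \<open>In right-action notation this says y_a y_b^-1 \<in> S.\<close>

definition y_equiv :: "bool list \<Rightarrow> bool list \<Rightarrow> bool" where
  "y_equiv a b \<longleftrightarrow> inv (ys b) \<circ> ys a \<in> S_grp"

lemma y_equiv_refl: "y_equiv a a"
  unfolding y_equiv_def S_grp_def using bij_ys[of a] by (simp add: bij_is_inj gen_id)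

lemma y_equiv_sym: "y_equiv a b \<Longrightarrow> y_equiv b a"
  unfolding y_equiv_def S_grp_def
  using gen_inv bij_ys by (metis o_inv_distrib bij_imp_bij_inv inv_inv_eq)

lemma y_equiv_trans: "y_equiv a b \<Longrightarrow> y_equiv b c \<Longrightarrow> y_equiv a c"
proof -
  assume "y_equiv a b" "y_equiv b c"
  then have "(inv (ys c) \<circ> ys b) \<circ> (inv (ys b) \<circ> ys a) \<in> S_grp"
    unfolding y_equiv_def S_grp_def by (rule gen_mult)
  moreover have "(inv (ys c) \<circ> ys b) \<circ> (inv (ys b) \<circ> ys a) = inv (ys c) \<circ> ys a"
    using bij_ys[of b] by (simp add: fun_eq_iff bij_is_surj surj_f_inv_f)
  ultimately show "y_equiv a c"
    unfolding y_equiv_def by simp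
qed

lemma y_equiv_conj:
  assumes "g \<in> S_grp" "bij g"
    and "\<And>\<eta>. g (conc a \<eta>) = conc a' \<eta>" "\<And>\<eta>. g (conc b \<eta>) = conc b' \<eta>"
  shows "y_equiv a b \<longleftrightarrow> y_equiv a' b'"
proof -
  have "ys a' = g \<circ> ys a \<circ> inv g"
    unfolding ys_def by (rule at_word_conj[OF assms(2,3)])
  moreover have "inv (ys b') = g \<circ> inv (ys b) \<circ> inv g"
    unfolding inv_ys by (rule at_word_conj[OF assms(2,4)])
  moreover have "inv g \<circ> g = id"
    using assms(2) by (simp add: bij_is_inj)
  ultimately have "inv (ys b') \<circ> ys a' = g \<circ> (inv (ys b) \<circ> ys a) \<circ> inv g"
    by (simp add: comp_assoc) (metis comp_assoc comp_id)
  then show ?thesis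
    using gen_group_conj_iff[OF assms(1)[unfolded S_grp_def] assms(2)]
    by (simp add: y_equiv_def S_grp_def)
qed

lemma y_equiv_10_move:
  assumes "g \<in> S_grp" "bij g"
    and "\<And>\<eta>. g (conc a \<eta>) = conc a' \<eta>" "\<And>\<eta>. g (conc c \<eta>) = conc c' \<eta>"
    and "y_equiv c [True, False]" "y_equiv c' [True, False]"
  shows "y_equiv a [True, False] \<longleftrightarrow> y_equiv a' [True, False]"
proof -
  have "y_equiv a [True, False] \<longleftrightarrow> y_equiv a c"
    using assms(5) by (meson y_equiv_sym y_equiv_trans)
  also have "\<dots> \<longleftrightarrow> y_equiv a' c'"
    by (rule y_equiv_conj[OF assms(1-4)])
  also have "\<dots> \<longleftrightarrow> y_equiv a' [True, False]"
    using assms(6) by (meson y_equiv_sym y_equiv_trans)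
  finally show ?thesis .
qed

lemma y_equiv_110_10: "y_equiv [True, True, False] [True, False]"
proof -
  have "y_equiv [True, False] [True, True, False]"
    unfolding y_equiv_def S_grp_def by (rule gen_base) simp
  then show ?thesis by (rule y_equiv_sym)
qed

lemma y_equiv_0_10: "y_equiv [False] [True, False]"
proof -
  have "y_equiv [False] [True, False] \<longleftrightarrow> y_equiv [True, False] [True, False]"
    by (rule y_equiv_10_move[OF S_grp_pmap bij_pmap2, where c = "[True, False]"
          and c' = "[True, True, False]"])
       (simp_all add: pmap_def numeral_eq_Suc y_equiv_refl y_equiv_110_10)
  then show ?thesis by (simp add: y_equiv_refl)
qed

lemma y_equiv_10_move_x:
  assumes "\<And>\<eta>. xmap (conc a \<eta>) = conc a' \<eta>"
  shows "y_equiv a [True, False] \<longleftrightarrow> y_equiv a' [True, False]"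
  by (rule y_equiv_10_move[OF S_grp_xmap bij_xmap assms, where c = "[True, False]"
        and c' = "[True, True, False]"])
     (simp_all add: xmap_def y_equiv_refl y_equiv_110_10)

lemma y_equiv_10_move_x1:
  assumes "\<And>\<eta>. xs [True] (conc a \<eta>) = conc a' \<eta>"
  shows "y_equiv a [True, False] \<longleftrightarrow> y_equiv a' [True, False]"
  by (rule y_equiv_10_move[OF S_grp_xs bij_at_word[OF bij_xmap, folded xs_def] assms,
        where c = "[False]" and c' = "[False]"])
     (simp_all add: xs_def at_word_def y_equiv_0_10)

text \<open>The prefix moves of x (00 to 0, 01 to 10, 1 to 11) and of x_1 (100 to 10, 101 to 110)
  reduce every word containing a 0 to 0 or to 10.\<close>

lemma y_equiv_10_if_zero_mem: "False \<in> set z \<Longrightarrow> y_equiv z [True, False]"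
proof (induct z rule: length_induct)
  case (1 z)
  then have IH: "y_equiv v [True, False]" if "length v < length z" "False \<in> set v" for v
    using that by blast
  have x: "y_equiv (False # False # u) [True, False] \<longleftrightarrow> y_equiv (False # u) [True, False]"
    "y_equiv (False # True # u) [True, False] \<longleftrightarrow> y_equiv (True # False # u) [True, False]"
    "y_equiv (True # u) [True, False] \<longleftrightarrow> y_equiv (True # True # u) [True, False]" for u
    by (rule y_equiv_10_move_x; simp add: xmap_def)+
  have x1: "y_equiv (True # False # False # u) [True, False]
        \<longleftrightarrow> y_equiv (True # False # u) [True, False]"
    "y_equiv (True # False # True # u) [True, False]
        \<longleftrightarrow> y_equiv (True # True # False # u) [True, False]" for u
    by (rule y_equiv_10_move_x1; simp add: xs_def at_word_def xmap_def)+
  have tf: "y_equiv (True # False # u) [True, False]" if "length (True # False # u) \<le> length z" for u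
  proof (cases u)
    case (Cons c u')
    then have "y_equiv (True # False # u') [True, False]"
      using that by (intro IH) simp_all
    then show ?thesis
      using Cons x1[of u'] x(3)[of "False # u'"] by (cases c) simp_all
  qed (simp add: y_equiv_refl)
  consider "z = [False]" | u where "z = False # False # u" | u where "z = False # True # u"
    | u where "z = True # True # u" | u where "z = True # False # u"
    using 1(2) by (metis (full_types) list.exhaust set_ConsD empty_iff list.set(1))
  then show ?case
  proof cases
    case (2 u)
    then show ?thesis using x(1)[of u] IH[of "False # u"] by simp
  next
    case (3 u)
    then show ?thesis using x(2)[of u] tf[of u] by simp
  next
    case (4 u)
    then show ?thesis using x(3)[of u] IH[of "True # u"] 1(2) by simp
  next
    case (5 u)
    then show ?thesis using tf[of u] by simp
  qed (simp add: y_equiv_0_10)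
qed

lemma y_equiv_if_zero_mem: "False \<in> set a \<Longrightarrow> False \<in> set b \<Longrightarrow> y_equiv a b"
  using y_equiv_10_if_zero_mem y_equiv_sym y_equiv_trans by blast

lemma not_replicate_True_imp_zero_mem:
  assumes "\<forall>m. s \<noteq> replicate m True"
  shows "False \<in> set s"
proof (rule ccontr)
  assume "False \<notin> set s"
  then have "s = replicate (length s) True"
    by (intro replicate_eqI) (metis (full_types))+
  with assms show False by blast
qed

lemma incomparable_replicate_True_False:
  assumes "False \<in> set s" "length s \<le> n"
  shows "incomparable s (replicate n True @ [False])"
proof -
  obtain i where i: "i < length s" "s ! i = False"
    using assms(1) unfolding in_set_conv_nth by blast
  with assms(2) have "i < n"
    by simp
  then have "i < length (replicate n True @ [False])" "(replicate n True @ [False]) ! i = True"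
    by (simp_all add: nth_append)
  with i show ?thesis
    unfolding incomparable_def by (intro exI[of _ i]) simp
qed

theorem lemma6p8:
  fixes ss :: "bool list list" and ts :: "int list"
  assumes "length ss = length ts"
    and "\<forall>s\<in>set ss. \<forall>m. s \<noteq> replicate m True"
    and "sum_list ts = 0"
  shows "rprod (map2 (\<lambda>s t. zpow (ys s) t) ss ts) \<in> S_grp"
proof -
  define r where "r = replicate (sum_list (map length ss)) True @ [False]"
  have fst_zip: "fst ` set (zip ss ts) = set ss"
    using map_fst_zip[OF assms(1)] by (metis set_map)
  have zero_mem: "False \<in> set s" if "s \<in> set ss" for s
    using assms(2) that by (blast intro: not_replicate_True_imp_zero_mem)
  have commute: "ys s \<circ> ys r = ys r \<circ> ys s" if "s \<in> fst ` set (zip ss ts)" for s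
    using that unfolding fst_zip ys_def r_def
    by (intro at_word_commute incomparable_replicate_True_False zero_mem member_le_sum_list) simp_all
  have mod_S: "inv (ys r) \<circ> ys s \<in> S_grp" if "s \<in> fst ` set (zip ss ts)" for s
    using that y_equiv_if_zero_mem[OF zero_mem, of s r] unfolding fst_zip y_equiv_def r_def by simp
  obtain B where "B \<in> S_grp"
    and "rprod (map2 (\<lambda>s t. zpow (ys s) t) ss ts) = zpow (ys r) (sum_list (map snd (zip ss ts))) \<circ> B"
    using rprod_zpow_in_coset[where R = "ys r" and ps = "zip ss ts" and F = ys,
        OF bij_ys bij_ys commute mod_S[unfolded S_grp_def], folded S_grp_def] by blast
  moreover have "sum_list (map snd (zip ss ts)) = 0"
    using assms(1,3) by simp
  ultimately show ?thesis by simp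
qed

end
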